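(* (i) Let $G$ be a digraph on $n$ vertices with $\delta^0(G)\geq 7n/8$ and let $x,y\in V(G)$ be distinct. Then for every orientation $Q$ of a path on $n$ vertices, $G$ contains a Hamilton path which is a copy of $Q$ whose endvertices are mapped to $x$ and $y$ (initial vertex of $Q$ to $x$, final vertex to $y$). (ii) Let $m\geq 10$ and let $G$ be a bipartite digraph with vertex classes $A,B$, $|A|=m+1$, $|B|=m$ (all edges go between $A$ and $B$, in either direction), and suppose $\delta^0(G)\geq (7m+2)/8$. Let $x,y\in A$ be distinct. Then for every orientation $Q$ of a path on $2m+1$ vertices, $G$ contains a Hamilton path which is a copy of $Q$ whose initial vertex is mapped to $x$ and final vertex to $y$.
   Context: A digraph has no loops and at most one edge from $x$ to $y$ for each ordered pair of distinct vertices (edges $xy$ and $yx$ may both be present). $\delta^0(G)$ is the minimum over all vertices of the minimum of in- and outdegree. A copy of an oriented path $Q$ in $G$ is an injective map $\phi:V(Q)\to V(G)$ with $\phi(u)\phi(v)\in E(G)$ for every edge $uv$ of $Q$; it is a Hamilton path if $\phi$ is a bijection. *)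

theory Defs
  imports Main
begin

definition digraph :: "'a set \<Rightarrow> ('a \<Rightarrow> 'a \<Rightarrow> bool) \<Rightarrow> bool" where
  "digraph V E \<longleftrightarrow> finite V \<and> (\<forall>x y. E x y \<longrightarrow> x \<in> V \<and> y \<in> V \<and> x \<noteq> y)"

definition outdeg :: "'a set \<Rightarrow> ('a \<Rightarrow> 'a \<Rightarrow> bool) \<Rightarrow> 'a \<Rightarrow> nat" where
  "outdeg V E v = card {u \<in> V. E v u}"

definition indeg :: "'a set \<Rightarrow> ('a \<Rightarrow> 'a \<Rightarrow> bool) \<Rightarrow> 'a \<Rightarrow> nat" where
  "indeg V E v = card {u \<in> V. E u v}"

definition min_semideg :: "'a set \<Rightarrow> ('a \<Rightarrow> 'a \<Rightarrow> bool) \<Rightarrow> nat" where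
  "min_semideg V E = Min ((\<lambda>v. min (outdeg V E v) (indeg V E v)) ` V)"

text \<open>An oriented path Q on n vertices 0,...,n-1 is given by a direction
  function dir: for i < n-1, dir i = True means the edge (i, i+1), False means (i+1, i).
  Edges of Q:\<close>
definition opath_edge :: "nat \<Rightarrow> (nat \<Rightarrow> bool) \<Rightarrow> nat \<Rightarrow> nat \<Rightarrow> bool" where
  "opath_edge n dir i j \<longleftrightarrow> i < n \<and> j < n \<and>
     ((j = Suc i \<and> dir i) \<or> (i = Suc j \<and> \<not> dir j))"

definition is_copy :: "nat \<Rightarrow> (nat \<Rightarrow> bool) \<Rightarrow> 'a set \<Rightarrow> ('a \<Rightarrow> 'a \<Rightarrow> bool) \<Rightarrow> (nat \<Rightarrow> 'a) \<Rightarrow> bool" where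
  "is_copy n dir V E \<phi> \<longleftrightarrow> inj_on \<phi> {..<n} \<and> \<phi> ` {..<n} \<subseteq> V \<and>
     (\<forall>i j. opath_edge n dir i j \<longrightarrow> E (\<phi> i) (\<phi> j))"

definition hamilton_copy :: "nat \<Rightarrow> (nat \<Rightarrow> bool) \<Rightarrow> 'a set \<Rightarrow> ('a \<Rightarrow> 'a \<Rightarrow> bool) \<Rightarrow> (nat \<Rightarrow> 'a) \<Rightarrow> bool" where
  "hamilton_copy n dir V E \<phi> \<longleftrightarrow> is_copy n dir V E \<phi> \<and> bij_betw \<phi> {..<n} V"

end

theory Submission
  imports Defs
begin

(*
  Proof by local repair.  Start from ANY bijection
  phi from the positions 0..N-1 onto the vertex set that has the required end vertices (and, in
  the bipartite case, puts the class A on even and B on odd positions, with the two end edges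
  already correct).  Call a position p bad if the edge of Q between p and p+1 is not realised
  by phi.  Whenever some p is bad, pick an interior position i with p in {i-1, i} and exchange
  the vertices at i and at some far-away interior position j such that all four edges of Q at
  positions i and j are realised afterwards.  Such a swap keeps the end vertices, makes the bad
  set strictly smaller, and so finitely many swaps yield a Hamilton copy (repair_by_swaps).

  A good partner j exists by counting: a position j fails only if phi j, phi (j-1) or phi (j+1)
  lies in one of a few sets of "missing neighbours", whose sizes are bounded by the minimum
  semidegree; the density conditions 8 delta >= 7n resp. 8 delta >= 7m+2 make these sets smaller
  than the set of candidate positions (good_swap_by_counting).
*)

definition oriented_edge :: "('a \<Rightarrow> 'a \<Rightarrow> bool) \<Rightarrow> bool \<Rightarrow> 'a \<Rightarrow> 'a \<Rightarrow> bool" where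
  "oriented_edge E d a b \<longleftrightarrow> (if d then E a b else E b a)"

definition bad_positions ::
    "('a \<Rightarrow> 'a \<Rightarrow> bool) \<Rightarrow> (nat \<Rightarrow> bool) \<Rightarrow> nat \<Rightarrow> (nat \<Rightarrow> 'a) \<Rightarrow> nat set" where
  "bad_positions E dir N \<phi> = {p. Suc p < N \<and> \<not> oriented_edge E (dir p) (\<phi> p) (\<phi> (Suc p))}"

lemma hamilton_copy_if_no_bad_positions:
  assumes "bij_betw \<phi> {..<N} V" and "bad_positions E dir N \<phi> = {}"
  shows "hamilton_copy N dir V E \<phi>"
  using assms unfolding hamilton_copy_def is_copy_def opath_edge_def bad_positions_def oriented_edge_def
  by (auto simp: bij_betw_def)

definition fits :: "('a \<Rightarrow> 'a \<Rightarrow> bool) \<Rightarrow> (nat \<Rightarrow> bool) \<Rightarrow> (nat \<Rightarrow> 'a) \<Rightarrow> nat \<Rightarrow> 'a \<Rightarrow> bool" where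
  "fits E dir \<phi> i w \<longleftrightarrow>
     oriented_edge E (dir (i - 1)) (\<phi> (i - 1)) w \<and> oriented_edge E (dir i) w (\<phi> (Suc i))"

definition swap_at :: "(nat \<Rightarrow> 'a) \<Rightarrow> nat \<Rightarrow> nat \<Rightarrow> nat \<Rightarrow> 'a" where
  "swap_at \<phi> i j = \<phi>(i := \<phi> j, j := \<phi> i)"

definition good_swap ::
    "('a \<Rightarrow> 'a \<Rightarrow> bool) \<Rightarrow> (nat \<Rightarrow> bool) \<Rightarrow> nat \<Rightarrow> (nat \<Rightarrow> 'a) \<Rightarrow> nat \<Rightarrow> nat \<Rightarrow> bool" where
  "good_swap E dir N \<phi> i j \<longleftrightarrow>
     1 \<le> i \<and> Suc i < N \<and> 1 \<le> j \<and> Suc j < N \<and> (Suc i < j \<or> Suc j < i) \<and>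
     fits E dir \<phi> i (\<phi> j) \<and> fits E dir \<phi> j (\<phi> i)"

lemma bad_positions_swap_at:
  assumes "good_swap E dir N \<phi> i j"
  shows "bad_positions E dir N (swap_at \<phi> i j) \<subseteq> bad_positions E dir N \<phi> - {i - 1, i}"
proof
  fix p assume p: "p \<in> bad_positions E dir N (swap_at \<phi> i j)"
  show "p \<in> bad_positions E dir N \<phi> - {i - 1, i}"
  proof (cases "p \<in> {i - 1, i, j - 1, j}")
    case True
    then show ?thesis using p assms
      unfolding bad_positions_def good_swap_def fits_def swap_at_def by (auto split: if_splits)
  next
    case False
    then have "swap_at \<phi> i j p = \<phi> p" "swap_at \<phi> i j (Suc p) = \<phi> (Suc p)"
      using assms unfolding good_swap_def swap_at_def by auto
    then show ?thesis using p False unfolding bad_positions_def by auto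
  qed
qed

lemma bij_betw_swap_at:
  assumes "bij_betw \<phi> S T" "i \<in> S" "j \<in> S"
  shows "bij_betw (swap_at \<phi> i j) S T"
proof -
  have "swap_at \<phi> i j = \<phi> \<circ> id(i := j, j := i)" unfolding swap_at_def by auto
  moreover have "bij_betw (id(i := j, j := i)) S S"
    unfolding bij_betw_def inj_on_def using assms(2,3) by (auto simp: image_def)
  ultimately show ?thesis using assms(1) bij_betw_trans by metis
qed

lemma swap_at_fixes_ends:
  assumes "good_swap E dir N \<phi> i j"
  shows "swap_at \<phi> i j 0 = \<phi> 0" and "swap_at \<phi> i j (N - 1) = \<phi> (N - 1)"
  using assms unfolding good_swap_def swap_at_def by auto

lemma repair_by_swaps:
  assumes start: "P \<phi>\<^sub>0"
    and step: "\<And>\<phi> p. P \<phi> \<Longrightarrow> p \<in> bad_positions E dir N \<phi> \<Longrightarrow>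
       \<exists>i j. p \<in> {i - 1, i} \<and> good_swap E dir N \<phi> i j \<and> P (swap_at \<phi> i j)"
  shows "\<exists>\<phi>. P \<phi> \<and> bad_positions E dir N \<phi> = {}"
proof -
  have finite_bad: "finite (bad_positions E dir N \<phi>)" for \<phi>
    by (rule finite_subset[of _ "{..<N}"]) (auto simp: bad_positions_def)
  have "P \<phi> \<Longrightarrow> \<exists>\<psi>. P \<psi> \<and> bad_positions E dir N \<psi> = {}" for \<phi>
  proof (induction "card (bad_positions E dir N \<phi>)" arbitrary: \<phi> rule: less_induct)
    case less
    show ?case
    proof (cases "bad_positions E dir N \<phi> = {}")
      case False
      then obtain p where p: "p \<in> bad_positions E dir N \<phi>" by blast
      then obtain i j where "p \<in> {i - 1, i}" and good: "good_swap E dir N \<phi> i j"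
        and P': "P (swap_at \<phi> i j)"
        using step less.prems by blast
      then have "bad_positions E dir N (swap_at \<phi> i j) \<subset> bad_positions E dir N \<phi>"
        using bad_positions_swap_at[OF good] p by blast
      then show ?thesis using less.hyps P' psubset_card_mono[OF finite_bad] by blast
    qed (use less.prems in blast)
  qed
  then show ?thesis using start by blast
qed

lemma bij_with_ends:
  assumes "finite S" "card S = Suc N" "x \<in> S" "y \<in> S" "x \<noteq> y"
  shows "\<exists>f. bij_betw f {..<Suc N} S \<and> f 0 = x \<and> f N = y"
proof -
  obtain xs where xs: "set xs = S - {x, y}" "distinct xs"
    using finite_distinct_list assms(1) by (meson finite_Diff)
  define L where "L = x # xs @ [y]"
  have "distinct L" "set L = S" using xs assms unfolding L_def by auto
  moreover from this have len: "length L = Suc N" using distinct_card assms(2) by metis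
  ultimately have "bij_betw ((!) L) {..<Suc N} S" by (intro bij_betw_nth) auto
  moreover have "L ! 0 = x" unfolding L_def by simp
  moreover have "L ! N = y"
  proof -
    have "N = Suc (length xs)" using len unfolding L_def by simp
    then show ?thesis unfolding L_def by (simp add: nth_append)
  qed
  ultimately show ?thesis by blast
qed

lemma interleave_bij:
  assumes f: "bij_betw f {..<Suc m} A" and g: "bij_betw g {..<m} B" and disj: "A \<inter> B = {}"
  shows "bij_betw (\<lambda>k. if even k then f (k div 2) else g (k div 2)) {..<2 * m + 1} (A \<union> B)"
proof -
  let ?h = "\<lambda>k. if even k then f (k div 2) else g (k div 2)"
  let ?evens = "{k \<in> {..<2 * m + 1}. even k}" and ?odds = "{k \<in> {..<2 * m + 1}. odd k}"
  have evens: "bij_betw (\<lambda>t. 2 * t) {..<Suc m} ?evens"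
    by (rule bij_betwI') (auto elim!: evenE)
  have odds: "bij_betw (\<lambda>t. 2 * t + 1) {..<m} ?odds"
    by (rule bij_betwI') (auto elim!: oddE)
  have "bij_betw (?h \<circ> (\<lambda>t. 2 * t)) {..<Suc m} A \<longleftrightarrow> bij_betw f {..<Suc m} A"
    "bij_betw (?h \<circ> (\<lambda>t. 2 * t + 1)) {..<m} B \<longleftrightarrow> bij_betw g {..<m} B"
    by (rule bij_betw_cong, simp)+
  then have "bij_betw ?h ?evens A" "bij_betw ?h ?odds B"
    using f g bij_betw_comp_iff[OF evens] bij_betw_comp_iff[OF odds] by blast+
  then have "bij_betw ?h (?evens \<union> ?odds) (A \<union> B)"
    using disj by (rule bij_betw_combine)
  moreover have "?evens \<union> ?odds = {..<2 * m + 1}" by blast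
  ultimately show ?thesis by simp
qed

section \<open>Finding a good swap by counting\<close>

lemma card_preimage_le:
  assumes "inj_on f C" and "finite M"
  shows "card {j \<in> C. f j \<in> M} \<le> card M"
  using assms by (intro card_inj_on_le[where f = f]) (auto intro: inj_on_subset)

lemma exists_not_in_smaller:
  assumes "finite S" "card S < card T"
  shows "\<exists>t\<in>T. t \<notin> S"
  using assms card_mono[of S T] by (metis not_less subsetI)

lemma good_swap_by_counting:
  assumes inj: "inj_on \<phi> {..<N}" and i: "1 \<le> i" "Suc i < N"
    and C: "finite C" "C \<subseteq> {j. 1 \<le> j \<and> Suc j < N \<and> (Suc i < j \<or> Suc j < i)}"
    and fin: "finite M" "finite L" "finite R"
    and here: "\<And>j. j \<in> C \<Longrightarrow> \<not> fits E dir \<phi> i (\<phi> j) \<Longrightarrow> \<phi> j \<in> M"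
    and there: "\<And>j. j \<in> C \<Longrightarrow> \<not> fits E dir \<phi> j (\<phi> i) \<Longrightarrow> \<phi> (j - 1) \<in> L \<or> \<phi> (Suc j) \<in> R"
    and few: "card M + card L + card R < card C"
  shows "\<exists>j\<in>C. good_swap E dir N \<phi> i j"
proof -
  have inj_here: "inj_on \<phi> C"
    using C(2) by (intro inj_on_subset[OF inj]) auto
  have inj_left: "inj_on (\<lambda>j. \<phi> (j - 1)) C"
  proof (rule inj_onI)
    fix a b assume "a \<in> C" "b \<in> C" "\<phi> (a - 1) = \<phi> (b - 1)"
    moreover have "1 \<le> a" "1 \<le> b" "a - 1 < N" "b - 1 < N" using \<open>a \<in> C\<close> \<open>b \<in> C\<close> C(2) by auto
    ultimately show "a = b" using inj_onD[OF inj, of "a - 1" "b - 1"] by auto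
  qed
  have inj_right: "inj_on (\<lambda>j. \<phi> (Suc j)) C"
  proof (rule inj_onI)
    fix a b assume "a \<in> C" "b \<in> C" "\<phi> (Suc a) = \<phi> (Suc b)"
    then show "a = b" using C(2) inj_onD[OF inj, of "Suc a" "Suc b"] by auto
  qed
  let ?X = "{j \<in> C. \<phi> j \<in> M} \<union> {j \<in> C. \<phi> (j - 1) \<in> L} \<union> {j \<in> C. \<phi> (Suc j) \<in> R}"
  have "card ?X \<le> card M + card L + card R"
    using card_Un_le[of "{j \<in> C. \<phi> j \<in> M} \<union> {j \<in> C. \<phi> (j - 1) \<in> L}"
        "{j \<in> C. \<phi> (Suc j) \<in> R}"]
      card_Un_le[of "{j \<in> C. \<phi> j \<in> M}" "{j \<in> C. \<phi> (j - 1) \<in> L}"]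
      card_preimage_le[OF inj_here fin(1)] card_preimage_le[OF inj_left fin(2)]
      card_preimage_le[OF inj_right fin(3)]
    by linarith
  then have "?X \<noteq> C" using few by auto
  then obtain j where "j \<in> C" "j \<notin> ?X" by blast
  then have "fits E dir \<phi> i (\<phi> j)" "fits E dir \<phi> j (\<phi> i)" using here there by blast+
  then show ?thesis using \<open>j \<in> C\<close> C(2) i unfolding good_swap_def by blast
qed

lemma interior_candidates:
  assumes "1 \<le> i" "Suc i < N"
  obtains C where "finite C" "C \<subseteq> {j. 1 \<le> j \<and> Suc j < N \<and> (Suc i < j \<or> Suc j < i)}"
    "N - 5 \<le> card C"
proof
  let ?C = "{1..N - 2} - {i - 1, i, Suc i}"
  show "finite ?C" "?C \<subseteq> {j. 1 \<le> j \<and> Suc j < N \<and> (Suc i < j \<or> Suc j < i)}"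
    using assms by auto
  have "card {1..N - 2} - card {i - 1, i, Suc i} \<le> card ?C"
    by (rule diff_card_le_card_Diff) auto
  moreover have "card {i - 1, i, Suc i} \<le> 3" by (simp add: card_insert_if)
  ultimately show "N - 5 \<le> card ?C" by simp
qed

lemma even_candidates:
  assumes "even i" "2 \<le> i" "i \<le> 2 * m - 2"
  obtains C where "finite C" "C \<subseteq> {j. 1 \<le> j \<and> Suc j < 2 * m + 1 \<and> (Suc i < j \<or> Suc j < i)}"
    "card C = m - 2" "\<And>j. j \<in> C \<Longrightarrow> even j"
proof
  let ?C = "(\<lambda>t. 2 * t) ` {1..m - 1} - {i}"
  show "finite ?C" "\<And>j. j \<in> ?C \<Longrightarrow> even j" by auto
  show "?C \<subseteq> {j. 1 \<le> j \<and> Suc j < 2 * m + 1 \<and> (Suc i < j \<or> Suc j < i)}"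
    using assms(1) by auto
  have "i \<in> (\<lambda>t. 2 * t) ` {1..m - 1}" using assms by (auto elim!: evenE)
  moreover have "card ((\<lambda>t. 2 * t) ` {1..m - 1}) = m - 1" by (simp add: card_image inj_on_def)
  ultimately show "card ?C = m - 2" by simp
qed

lemma interior_position:
  assumes "Suc p < N" "3 \<le> N"
  obtains i where "1 \<le> i" "Suc i < N" "p \<in> {i - 1, i}"
  using assms by (intro that[of "max 1 p"]) auto

lemma even_interior_position:
  assumes "Suc p < 2 * m + 1" "p \<noteq> 0" "p \<noteq> 2 * m - 1"
  obtains i where "even i" "2 \<le> i" "i \<le> 2 * m - 2" "p \<in> {i - 1, i}"
proof (cases "even p")
  case True
  then show ?thesis using assms by (intro that[of p]) (auto elim!: evenE)
next
  case False
  then have "2 \<le> Suc p" "Suc p \<le> 2 * m - 2" using assms by presburger+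
  then show ?thesis using False by (intro that[of "Suc p"]) auto
qed

lemma min_semideg_le:
  assumes "finite V" "v \<in> V"
  shows "min_semideg V E \<le> outdeg V E v" and "min_semideg V E \<le> indeg V E v"
  using Min_le[of "(\<lambda>v. min (outdeg V E v) (indeg V E v)) ` V"] assms
  unfolding min_semideg_def by fastforce+

lemma card_non_oriented_le:
  assumes T: "finite T" "T \<subseteq> V" and nbrs: "{w \<in> V. E u w} \<subseteq> T" "{w \<in> V. E w u} \<subseteq> T"
    and deg: "\<delta> \<le> outdeg V E u" "\<delta> \<le> indeg V E u"
  shows "card {w \<in> T. \<not> oriented_edge E d u w} \<le> card T - \<delta>"
    and "card {w \<in> T. \<not> oriented_edge E d w u} \<le> card T - \<delta>"
proof -
  have "{w \<in> T. \<not> E u w} = T - {w \<in> V. E u w}" "{w \<in> T. \<not> E w u} = T - {w \<in> V. E w u}"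
    using T(2) by auto
  then have "card {w \<in> T. \<not> E u w} = card T - outdeg V E u"
    "card {w \<in> T. \<not> E w u} = card T - indeg V E u"
    using nbrs T(1) unfolding outdeg_def indeg_def by (simp_all add: card_Diff_subset finite_subset)
  then show "card {w \<in> T. \<not> oriented_edge E d u w} \<le> card T - \<delta>"
    and "card {w \<in> T. \<not> oriented_edge E d w u} \<le> card T - \<delta>"
    using deg unfolding oriented_edge_def by (cases d; simp)+
qed

text \<open>The vertices of T not joined to u in both directions: they may fail an edge with u
  whatever its orientation.\<close>
definition non_mutual :: "('a \<Rightarrow> 'a \<Rightarrow> bool) \<Rightarrow> 'a set \<Rightarrow> 'a \<Rightarrow> 'a set" where
  "non_mutual E T u = {w \<in> T. \<not> (E u w \<and> E w u)}"

lemma non_mutualI: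
  assumes "w \<in> T"
  shows "\<not> oriented_edge E d u w \<Longrightarrow> w \<in> non_mutual E T u"
    and "\<not> oriented_edge E d w u \<Longrightarrow> w \<in> non_mutual E T u"
  using assms unfolding non_mutual_def oriented_edge_def by (auto split: if_splits)

lemma card_non_mutual_le:
  assumes "finite T" "T \<subseteq> V" "{w \<in> V. E u w} \<subseteq> T" "{w \<in> V. E w u} \<subseteq> T"
    and "\<delta> \<le> outdeg V E u" "\<delta> \<le> indeg V E u"
  shows "card (non_mutual E T u) \<le> 2 * (card T - \<delta>)"
proof -
  have "non_mutual E T u =
      {w \<in> T. \<not> oriented_edge E True u w} \<union> {w \<in> T. \<not> oriented_edge E True w u}"
    unfolding non_mutual_def oriented_edge_def by auto
  then show ?thesis
    using card_Un_le[of "{w \<in> T. \<not> oriented_edge E True u w}" "{w \<in> T. \<not> oriented_edge E True w u}"]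
      card_non_oriented_le[OF assms, of True] by simp
qed

lemma not_fits_non_mutual_neighbour:
  assumes "\<not> fits E dir \<phi> i w" "w \<in> T" "w \<in> T'"
  shows "w \<in> non_mutual E T (\<phi> (i - 1)) \<union> non_mutual E T' (\<phi> (Suc i))"
proof -
  have "\<not> oriented_edge E (dir (i - 1)) (\<phi> (i - 1)) w \<or> \<not> oriented_edge E (dir i) w (\<phi> (Suc i))"
    using assms(1) unfolding fits_def by blast
  then show ?thesis
    using non_mutualI(1)[OF assms(2), of E "dir (i - 1)" "\<phi> (i - 1)"]
      non_mutualI(2)[OF assms(3), of E "dir i" "\<phi> (Suc i)"] by blast
qed

lemma not_fits_non_mutual:
  assumes "\<not> fits E dir \<phi> j w" "\<phi> (j - 1) \<in> T" "\<phi> (Suc j) \<in> T"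
  shows "\<phi> (j - 1) \<in> non_mutual E T w \<or> \<phi> (Suc j) \<in> non_mutual E T w"
  using assms unfolding fits_def by (blast intro: non_mutualI)

section \<open>Part (i): digraphs with minimum semidegree at least 7n/8\<close>

locale dense_digraph =
  fixes V :: "'a set" and E :: "'a \<Rightarrow> 'a \<Rightarrow> bool"
  assumes digraph: "digraph V E"
    and dense: "7 * card V \<le> 8 * min_semideg V E"
begin

abbreviation \<delta> :: nat where "\<delta> \<equiv> min_semideg V E"

lemma finite_V: "finite V"
  using digraph unfolding digraph_def by blast

lemma semidegree: "v \<in> V \<Longrightarrow> \<delta> \<le> outdeg V E v \<and> \<delta> \<le> indeg V E v"
  using min_semideg_le[OF finite_V] by blast

lemma neighbours_in_rest: "{w \<in> V. E u w} \<subseteq> V - {u}" "{w \<in> V. E w u} \<subseteq> V - {u}"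
  using digraph unfolding digraph_def by auto

text \<open>Since there are no loops, delta \<le> n - 1, and the density condition forces n \<ge> 8.\<close>
lemma semidegree_le_card:
  assumes "V \<noteq> {}" shows "\<delta> \<le> card V - 1" and "8 \<le> card V"
proof -
  obtain v where v: "v \<in> V" using assms by blast
  have "outdeg V E v \<le> card (V - {v})"
    unfolding outdeg_def by (intro card_mono) (use finite_V neighbours_in_rest in auto)
  then show le: "\<delta> \<le> card V - 1"
    using semidegree[OF v] v finite_V by simp
  have "card V > 0" using v finite_V card_gt_0_iff by blast
  then show "8 \<le> card V" using le dense by linarith
qed

lemma card_non_mutual:
  assumes "u \<in> V"
  shows "card (non_mutual E (V - {u}) u) \<le> 2 * (card V - 1 - \<delta>)"
  using card_non_mutual_le[of "V - {u}" V E u] finite_V neighbours_in_rest semidegree[OF assms] assms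
  by simp

text \<open>The swap step: a misfit w at position i is not mutually joined to phi (i-1) or phi (i+1),
  and a position j rejecting phi i has a neighbour not mutually joined to phi i; together at most
  8 (n - 1 - delta) < n - 5 positions are excluded.\<close>
lemma good_swap_exists:
  assumes bij: "bij_betw \<phi> {..<card V} V" and p: "p \<in> bad_positions E dir (card V) \<phi>"
  shows "\<exists>i j. p \<in> {i - 1, i} \<and> good_swap E dir (card V) \<phi> i j"
proof -
  let ?n = "card V"
  have inj: "inj_on \<phi> {..<?n}" and img: "\<And>k. k < ?n \<Longrightarrow> \<phi> k \<in> V"
    using bij by (auto simp: bij_betw_def)
  have distinct: "\<phi> a \<noteq> \<phi> b" if "a < ?n" "b < ?n" "a \<noteq> b" for a b
    using inj_onD[OF inj] that by blast
  have "V \<noteq> {}" using p img unfolding bad_positions_def by auto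
  note bounds = semidegree_le_card[OF this]
  have "Suc p < ?n" "3 \<le> ?n" using p bounds(2) unfolding bad_positions_def by auto
  then obtain i where i: "1 \<le> i" "Suc i < ?n" "p \<in> {i - 1, i}"
    by (rule interior_position)
  obtain C where C: "finite C" "C \<subseteq> {j. 1 \<le> j \<and> Suc j < ?n \<and> (Suc i < j \<or> Suc j < i)}"
    and card_C: "?n - 5 \<le> card C"
    using interior_candidates[OF i(1,2)] by blast
  define M where "M = non_mutual E (V - {\<phi> (i - 1)}) (\<phi> (i - 1)) \<union>
                      non_mutual E (V - {\<phi> (Suc i)}) (\<phi> (Suc i))"
  define L where "L = non_mutual E (V - {\<phi> i}) (\<phi> i)"
  have at: "card (non_mutual E (V - {\<phi> k}) (\<phi> k)) \<le> 2 * (?n - 1 - \<delta>)" if "k < ?n" for k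
    using card_non_mutual img that by blast
  have "i - 1 < ?n" "i < ?n" using i by auto
  then have "card M \<le> 4 * (?n - 1 - \<delta>)" and card_L: "card L \<le> 2 * (?n - 1 - \<delta>)"
    using at[OF \<open>i - 1 < ?n\<close>] at[OF i(2)] at[OF \<open>i < ?n\<close>]
      card_Un_le[of "non_mutual E (V - {\<phi> (i - 1)}) (\<phi> (i - 1))"
        "non_mutual E (V - {\<phi> (Suc i)}) (\<phi> (Suc i))"]
    unfolding M_def L_def by linarith+
  then have few: "card M + card L + card L < card C"
    using card_C bounds dense by linarith
  have here: "\<phi> j \<in> M" if "j \<in> C" "\<not> fits E dir \<phi> i (\<phi> j)" for j
  proof -
    have "j < ?n" "i - 1 < ?n" "j \<noteq> i - 1" "j \<noteq> Suc i" using that(1) C(2) i by auto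
    then have "\<phi> j \<in> V - {\<phi> (i - 1)}" "\<phi> j \<in> V - {\<phi> (Suc i)}"
      using img[of j] distinct[of j "i - 1"] distinct[of j "Suc i"] i(2) by auto
    then show ?thesis using not_fits_non_mutual_neighbour[OF that(2)] unfolding M_def by simp
  qed
  have there: "\<phi> (j - 1) \<in> L \<or> \<phi> (Suc j) \<in> L" if "j \<in> C" "\<not> fits E dir \<phi> j (\<phi> i)" for j
  proof -
    have "Suc j < ?n" "i < ?n" "j - 1 \<noteq> i" "Suc j \<noteq> i" using that(1) C(2) i by auto
    then have "\<phi> (j - 1) \<in> V - {\<phi> i}" "\<phi> (Suc j) \<in> V - {\<phi> i}"
      using img[of "j - 1"] img[of "Suc j"] distinct[of "j - 1" i] distinct[of "Suc j" i] by auto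
    then show ?thesis using not_fits_non_mutual[OF that(2)] unfolding L_def by simp
  qed
  have fin: "finite M" "finite L" using finite_V unfolding M_def L_def non_mutual_def by auto
  show ?thesis
    using good_swap_by_counting[OF inj i(1,2) C fin(1,2,2) here there few] i(3) by blast
qed

text \<open>Part (i) of the theorem: the invariant is bijectivity together with the two end vertices.\<close>
theorem hamilton_path_with_ends:
  assumes "x \<in> V" "y \<in> V" "x \<noteq> y"
  shows "\<exists>\<phi>. hamilton_copy (card V) dir V E \<phi> \<and> \<phi> 0 = x \<and> \<phi> (card V - 1) = y"
proof -
  let ?n = "card V"
  define P where "P \<phi> \<longleftrightarrow> bij_betw \<phi> {..<?n} V \<and> \<phi> 0 = x \<and> \<phi> (?n - 1) = y" for \<phi>
  have "?n > 0" using assms finite_V card_gt_0_iff by blast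
  then have n: "Suc (?n - 1) = ?n" by simp
  obtain \<phi>\<^sub>0 where "P \<phi>\<^sub>0"
    using bij_with_ends[OF finite_V _ assms, of "?n - 1"] n unfolding P_def by auto
  moreover have "\<exists>i j. p \<in> {i - 1, i} \<and> good_swap E dir ?n \<phi> i j \<and> P (swap_at \<phi> i j)"
    if P: "P \<phi>" and bad: "p \<in> bad_positions E dir ?n \<phi>" for \<phi> p
  proof -
    obtain i j where ij: "p \<in> {i - 1, i}" "good_swap E dir ?n \<phi> i j"
      using good_swap_exists[of \<phi> p dir] P bad unfolding P_def by blast
    then have "i < ?n" "j < ?n" unfolding good_swap_def by auto
    then have "P (swap_at \<phi> i j)"
      using P bij_betw_swap_at[of \<phi> "{..<?n}" V i j] swap_at_fixes_ends[OF ij(2)]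
      unfolding P_def by simp
    then show ?thesis using ij by blast
  qed
  ultimately obtain \<phi> where "P \<phi>" "bad_positions E dir ?n \<phi> = {}"
    using repair_by_swaps[where P = P] by metis
  then show ?thesis using hamilton_copy_if_no_bad_positions unfolding P_def by blast
qed

end

section \<open>Part (ii): balanced bipartite digraphs with one extra vertex\<close>

locale dense_bipartite_digraph =
  fixes A B :: "'a set" and E :: "'a \<Rightarrow> 'a \<Rightarrow> bool" and m :: nat
  assumes large: "10 \<le> m"
    and digraph: "digraph (A \<union> B) E"
    and disjoint: "A \<inter> B = {}"
    and card_A: "card A = m + 1" and card_B: "card B = m"
    and bipartite: "\<And>u v. E u v \<Longrightarrow> (u \<in> A \<and> v \<in> B) \<or> (u \<in> B \<and> v \<in> A)"
    and dense: "7 * m + 2 \<le> 8 * min_semideg (A \<union> B) E"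
begin

abbreviation \<delta> :: nat where "\<delta> \<equiv> min_semideg (A \<union> B) E"

lemma finite_A: "finite A" and finite_B: "finite B"
  using digraph unfolding digraph_def by auto

lemma semidegree: "v \<in> A \<union> B \<Longrightarrow> \<delta> \<le> outdeg (A \<union> B) E v \<and> \<delta> \<le> indeg (A \<union> B) E v"
  using min_semideg_le[of "A \<union> B" v E] finite_A finite_B by simp

lemma neighbours_of_A: "u \<in> A \<Longrightarrow> {w \<in> A \<union> B. E u w} \<subseteq> B \<and> {w \<in> A \<union> B. E w u} \<subseteq> B"
  and neighbours_of_B: "u \<in> B \<Longrightarrow> {w \<in> A \<union> B. E u w} \<subseteq> A \<and> {w \<in> A \<union> B. E w u} \<subseteq> A"
  using bipartite disjoint by blast+

text \<open>Vertices of A have all their neighbours in B.\<close>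
lemma semidegree_le_m: "\<delta> \<le> m"
proof -
  have "A \<noteq> {}" using card_A by auto
  then obtain x where x: "x \<in> A" by blast
  have "outdeg (A \<union> B) E x \<le> card B"
    unfolding outdeg_def using neighbours_of_A[OF x] finite_B by (intro card_mono) auto
  then show ?thesis using semidegree[of x] x card_B by simp
qed

lemma card_non_oriented_in_A:
  assumes "u \<in> B"
  shows "card {w \<in> A. \<not> oriented_edge E d u w} \<le> m + 1 - \<delta>"
    and "card {w \<in> A. \<not> oriented_edge E d w u} \<le> m + 1 - \<delta>"
  using card_non_oriented_le[of A "A \<union> B" E u \<delta> d] finite_A neighbours_of_B[OF assms]
    semidegree[of u] assms card_A by auto

lemma card_non_oriented_in_B:
  assumes "u \<in> A"
  shows "card {w \<in> B. \<not> oriented_edge E d u w} \<le> m - \<delta>"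
    and "card {w \<in> B. \<not> oriented_edge E d w u} \<le> m - \<delta>"
  using card_non_oriented_le[of B "A \<union> B" E u \<delta> d] finite_B neighbours_of_A[OF assms]
    semidegree[of u] assms card_B by auto

lemma card_non_mutual_in_B:
  assumes "u \<in> A"
  shows "card (non_mutual E B u) \<le> 2 * (m - \<delta>)"
  using card_non_mutual_le[of B "A \<union> B" E u \<delta>] finite_B neighbours_of_A[OF assms]
    semidegree[of u] assms card_B by auto

lemma card_misfits_in_A:
  assumes "\<phi> (i - 1) \<in> B" "\<phi> (Suc i) \<in> B"
  shows "card {w \<in> A. \<not> fits E dir \<phi> i w} \<le> 2 * (m + 1 - \<delta>)"
proof -
  have "{w \<in> A. \<not> fits E dir \<phi> i w} =
      {w \<in> A. \<not> oriented_edge E (dir (i - 1)) (\<phi> (i - 1)) w} \<union>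
      {w \<in> A. \<not> oriented_edge E (dir i) w (\<phi> (Suc i))}"
    unfolding fits_def by auto
  then show ?thesis
    using card_Un_le[of "{w \<in> A. \<not> oriented_edge E (dir (i - 1)) (\<phi> (i - 1)) w}"
        "{w \<in> A. \<not> oriented_edge E (dir i) w (\<phi> (Suc i))}"]
      card_non_oriented_in_A(1)[OF assms(1), of "dir (i - 1)"]
      card_non_oriented_in_A(2)[OF assms(2), of "dir i"]
    by simp
qed

definition alternating :: "(nat \<Rightarrow> 'a) \<Rightarrow> bool" where
  "alternating \<phi> \<longleftrightarrow> (\<forall>k < 2 * m + 1. (even k \<longrightarrow> \<phi> k \<in> A) \<and> (odd k \<longrightarrow> \<phi> k \<in> B))"

lemma alternating_swap_at:
  assumes "alternating \<phi>" "even i" "even j" "i < 2 * m + 1" "j < 2 * m + 1"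
  shows "alternating (swap_at \<phi> i j)"
  using assms unfolding alternating_def swap_at_def by auto

text \<open>The swap step, exchanging two vertices of A.  The two end edges are assumed correct, so
  the bad edge lies at an even interior position i.  Since phi i itself does not fit at i, at most
  2 (m + 1 - delta) - 1 other vertices of A misfit at i, and at most 4 (m - delta) positions j are
  rejected because of their neighbours in B; this is less than the m - 2 candidates.\<close>
lemma good_swap_exists:
  assumes bij: "bij_betw \<phi> {..<2 * m + 1} (A \<union> B)" and alt: "alternating \<phi>"
    and ends_ok: "0 \<notin> bad_positions E dir (2 * m + 1) \<phi>"
      "2 * m - 1 \<notin> bad_positions E dir (2 * m + 1) \<phi>"
    and p: "p \<in> bad_positions E dir (2 * m + 1) \<phi>"
  shows "\<exists>i j. p \<in> {i - 1, i} \<and> even i \<and> even j \<and> good_swap E dir (2 * m + 1) \<phi> i j"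
proof -
  let ?N = "2 * m + 1"
  have inj: "inj_on \<phi> {..<?N}" using bij by (simp add: bij_betw_def)
  have in_A: "\<phi> k \<in> A" if "even k" "k < ?N" for k using alt that unfolding alternating_def by blast
  have in_B: "\<phi> k \<in> B" if "odd k" "k < ?N" for k using alt that unfolding alternating_def by blast
  have "Suc p < ?N" using p unfolding bad_positions_def by auto
  moreover have "p \<noteq> 0" "p \<noteq> 2 * m - 1" using p ends_ok by metis+
  ultimately obtain i where i: "even i" "2 \<le> i" "i \<le> 2 * m - 2" "p \<in> {i - 1, i}"
    by (rule even_interior_position)
  obtain C where C: "finite C" "C \<subseteq> {j. 1 \<le> j \<and> Suc j < ?N \<and> (Suc i < j \<or> Suc j < i)}"
    and card_C: "card C = m - 2" and C_even: "\<And>j. j \<in> C \<Longrightarrow> even j"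
    using even_candidates[OF i(1-3)] by blast
  define M where "M = {w \<in> A. \<not> fits E dir \<phi> i w} - {\<phi> i}"
  define L where "L = non_mutual E B (\<phi> i)"
  have "\<phi> i \<in> {w \<in> A. \<not> fits E dir \<phi> i w}"
    using p i in_A[of i] unfolding fits_def bad_positions_def by auto
  then have "card M + 1 \<le> 2 * (m + 1 - \<delta>)"
    using finite_A card.remove[of "{w \<in> A. \<not> fits E dir \<phi> i w}" "\<phi> i"] i
      card_misfits_in_A[of \<phi> i dir] in_B[of "i - 1"] in_B[of "Suc i"]
    unfolding M_def by simp
  moreover have "card L \<le> 2 * (m - \<delta>)"
    using card_non_mutual_in_B in_A i unfolding L_def by simp
  moreover have "m + 1 - \<delta> = (m - \<delta>) + 1" "7 * m + 2 \<le> 8 * (m - (m - \<delta>))"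
    using semidegree_le_m dense by simp_all
  ultimately have few: "card M + card L + card L < card C"
    using card_C large by linarith
  have here: "\<phi> j \<in> M" if "j \<in> C" "\<not> fits E dir \<phi> i (\<phi> j)" for j
  proof -
    have "even j" "j < ?N" "j \<noteq> i" "i < ?N" using C_even[OF that(1)] that(1) C(2) i by auto
    then have "\<phi> j \<in> A" "\<phi> j \<noteq> \<phi> i" using in_A[of j] inj_onD[OF inj, of j i] by auto
    then show ?thesis using that(2) unfolding M_def by simp
  qed
  have there: "\<phi> (j - 1) \<in> L \<or> \<phi> (Suc j) \<in> L" if "j \<in> C" "\<not> fits E dir \<phi> j (\<phi> i)" for j
  proof -
    have "even j" "1 \<le> j" "Suc j < ?N" using C_even[OF that(1)] that(1) C(2) by auto
    then have "\<phi> (j - 1) \<in> B" "\<phi> (Suc j) \<in> B" using in_B[of "j - 1"] in_B[of "Suc j"] by auto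
    then show ?thesis using not_fits_non_mutual[OF that(2)] unfolding L_def by simp
  qed
  have fin: "finite M" "finite L" using finite_A finite_B unfolding M_def L_def non_mutual_def by auto
  have "1 \<le> i" "Suc i < ?N" using i by auto
  then obtain j where "j \<in> C" "good_swap E dir ?N \<phi> i j"
    using good_swap_by_counting[OF inj _ _ C fin(1,2,2) here there few] by blast
  then show ?thesis using i C_even by blast
qed

text \<open>Every vertex of A has more than one correct neighbour in B for any prescribed orientation,
  so the two end edges of the path can be realised with distinct vertices of B.\<close>
lemma end_neighbours:
  assumes x: "x \<in> A" and y: "y \<in> A"
  obtains b b' where "b \<in> B" "b' \<in> B" "b' \<noteq> b"
    "oriented_edge E (dir 0) x b" "oriented_edge E (dir (2 * m - 1)) b' y"
proof -
  have "2 \<le> \<delta>" using dense large by linarith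
  then have small: "card {w \<in> B. \<not> oriented_edge E (dir 0) x w} < card B"
    using card_non_oriented_in_B(1)[OF x, of "dir 0"] card_B large by linarith
  obtain b where b: "b \<in> B" "oriented_edge E (dir 0) x b"
    using exists_not_in_smaller[OF _ small] finite_B by auto
  have "card (insert b {w \<in> B. \<not> oriented_edge E (dir (2 * m - 1)) w y})
      \<le> Suc (card {w \<in> B. \<not> oriented_edge E (dir (2 * m - 1)) w y})"
    using finite_B by (simp add: card_insert_if)
  then have small': "card (insert b {w \<in> B. \<not> oriented_edge E (dir (2 * m - 1)) w y}) < card B"
    using card_non_oriented_in_B(2)[OF y, of "dir (2 * m - 1)"] card_B \<open>2 \<le> \<delta>\<close> large
    by linarith
  then obtain b' where "b' \<in> B" "b' \<noteq> b" "oriented_edge E (dir (2 * m - 1)) b' y"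
    using exists_not_in_smaller[OF _ small'] finite_B by auto
  then show ?thesis using that b by blast
qed

text \<open>Start: x, the vertex b, then the rest of A and B alternately, the vertex b', and y.\<close>
lemma initial_arrangement:
  assumes x: "x \<in> A" and y: "y \<in> A" and "x \<noteq> y"
  obtains \<phi> where "bij_betw \<phi> {..<2 * m + 1} (A \<union> B)" "alternating \<phi>" "\<phi> 0 = x" "\<phi> (2 * m) = y"
    "0 \<notin> bad_positions E dir (2 * m + 1) \<phi>" "2 * m - 1 \<notin> bad_positions E dir (2 * m + 1) \<phi>"
proof -
  obtain b b' where b: "b \<in> B" "oriented_edge E (dir 0) x b"
    and b': "b' \<in> B" "b' \<noteq> b" "oriented_edge E (dir (2 * m - 1)) b' y"
    using end_neighbours[OF x y] by metis
  obtain f where f: "bij_betw f {..<Suc m} A" "f 0 = x" "f m = y"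
    using bij_with_ends[OF finite_A _ x y \<open>x \<noteq> y\<close>] card_A by auto
  have m: "Suc (m - 1) = m" using large by simp
  obtain g where g: "bij_betw g {..<m} B" "g 0 = b" "g (m - 1) = b'"
    using bij_with_ends[OF finite_B _ b(1) b'(1) b'(2)[symmetric], of "m - 1"] card_B m by auto
  define \<phi> where "\<phi> = (\<lambda>k. if even k then f (k div 2) else g (k div 2))"
  have "2 * m - 1 = Suc (2 * (m - 1))" "Suc (2 * m - 1) = 2 * m" using large by simp_all
  then have ends: "\<phi> 0 = x" "\<phi> 1 = b" "\<phi> (2 * m) = y" "\<phi> (2 * m - 1) = b'" "Suc (2 * m - 1) = 2 * m"
    using f g unfolding \<phi>_def by simp_all
  show ?thesis
  proof (rule that)
    show "bij_betw \<phi> {..<2 * m + 1} (A \<union> B)"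
      unfolding \<phi>_def using interleave_bij[OF f(1) g(1) disjoint] .
    show "alternating \<phi>"
      unfolding alternating_def \<phi>_def using bij_betwE[OF f(1)] bij_betwE[OF g(1)]
      by (auto elim!: evenE oddE)
    show "\<phi> 0 = x" "\<phi> (2 * m) = y" using ends by simp_all
    show "0 \<notin> bad_positions E dir (2 * m + 1) \<phi>" "2 * m - 1 \<notin> bad_positions E dir (2 * m + 1) \<phi>"
      using ends b b' unfolding bad_positions_def by auto
  qed
qed

text \<open>Part (ii) of the theorem: the invariant also keeps the classes on their positions and the two
  end edges correct; good swaps exchange vertices of A only.\<close>
theorem hamilton_path_with_ends:
  assumes "x \<in> A" "y \<in> A" "x \<noteq> y"
  shows "\<exists>\<phi>. hamilton_copy (2 * m + 1) dir (A \<union> B) E \<phi> \<and> \<phi> 0 = x \<and> \<phi> (2 * m) = y"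
proof -
  let ?N = "2 * m + 1"
  define P where "P \<phi> \<longleftrightarrow> bij_betw \<phi> {..<?N} (A \<union> B) \<and> alternating \<phi> \<and> \<phi> 0 = x \<and> \<phi> (2 * m) = y \<and>
      0 \<notin> bad_positions E dir ?N \<phi> \<and> 2 * m - 1 \<notin> bad_positions E dir ?N \<phi>" for \<phi>
  obtain \<phi>\<^sub>0 where "P \<phi>\<^sub>0"
    using initial_arrangement[OF assms, of dir] unfolding P_def by metis
  moreover have "\<exists>i j. p \<in> {i - 1, i} \<and> good_swap E dir ?N \<phi> i j \<and> P (swap_at \<phi> i j)"
    if P: "P \<phi>" and bad: "p \<in> bad_positions E dir ?N \<phi>" for \<phi> p
  proof -
    obtain i j where ij: "p \<in> {i - 1, i}" "even i" "even j" "good_swap E dir ?N \<phi> i j"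
      using good_swap_exists[of \<phi> dir p] P bad unfolding P_def by blast
    then have "i < ?N" "j < ?N" unfolding good_swap_def by auto
    moreover note swap_at_fixes_ends[OF ij(4)] bad_positions_swap_at[OF ij(4)]
    ultimately have "P (swap_at \<phi> i j)"
      using P bij_betw_swap_at[of \<phi> "{..<?N}" "A \<union> B" i j] alternating_swap_at[of \<phi> i j] ij(2,3)
      unfolding P_def by auto
    then show ?thesis using ij by blast
  qed
  ultimately obtain \<phi> where "P \<phi>" "bad_positions E dir ?N \<phi> = {}"
    using repair_by_swaps[where P = P] by metis
  then show ?thesis using hamilton_copy_if_no_bad_positions unfolding P_def by blast
qed

end

theorem proposition4p2:
  shows
  "(\<forall>(V :: 'a set) E x y (dir :: nat \<Rightarrow> bool).
      digraph V E \<and> 8 * min_semideg V E \<ge> 7 * card V \<and>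
      x \<in> V \<and> y \<in> V \<and> x \<noteq> y \<longrightarrow>
      (\<exists>\<phi>. hamilton_copy (card V) dir V E \<phi> \<and> \<phi> 0 = x \<and> \<phi> (card V - 1) = y))
   \<and>
   (\<forall>(A :: 'b set) B E (m :: nat) x y (dir :: nat \<Rightarrow> bool).
      m \<ge> 10 \<and> digraph (A \<union> B) E \<and> A \<inter> B = {} \<and>
      card A = m + 1 \<and> card B = m \<and>
      (\<forall>u v. E u v \<longrightarrow> (u \<in> A \<and> v \<in> B) \<or> (u \<in> B \<and> v \<in> A)) \<and>
      8 * min_semideg (A \<union> B) E \<ge> 7 * m + 2 \<and>
      x \<in> A \<and> y \<in> A \<and> x \<noteq> y \<longrightarrow>
      (\<exists>\<phi>. hamilton_copy (2 * m + 1) dir (A \<union> B) E \<phi> \<and> \<phi> 0 = x \<and> \<phi> (2 * m) = y))"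
proof (intro conjI allI impI)
  fix V :: "'a set" and E x y and dir :: "nat \<Rightarrow> bool"
  assume "digraph V E \<and> 8 * min_semideg V E \<ge> 7 * card V \<and> x \<in> V \<and> y \<in> V \<and> x \<noteq> y"
  then show "\<exists>\<phi>. hamilton_copy (card V) dir V E \<phi> \<and> \<phi> 0 = x \<and> \<phi> (card V - 1) = y"
    using dense_digraph.hamilton_path_with_ends[of V E x y dir] unfolding dense_digraph_def by blast
next
  fix A :: "'b set" and B E and m :: nat and x y and dir :: "nat \<Rightarrow> bool"
  assume "m \<ge> 10 \<and> digraph (A \<union> B) E \<and> A \<inter> B = {} \<and> card A = m + 1 \<and> card B = m \<and>
      (\<forall>u v. E u v \<longrightarrow> (u \<in> A \<and> v \<in> B) \<or> (u \<in> B \<and> v \<in> A)) \<and>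
      8 * min_semideg (A \<union> B) E \<ge> 7 * m + 2 \<and> x \<in> A \<and> y \<in> A \<and> x \<noteq> y"
  then show "\<exists>\<phi>. hamilton_copy (2 * m + 1) dir (A \<union> B) E \<phi> \<and> \<phi> 0 = x \<and> \<phi> (2 * m) = y"
    using dense_bipartite_digraph.hamilton_path_with_ends[of A B E m x y dir]
    unfolding dense_bipartite_digraph_def by blast
qed

end
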